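(* Let $H$ be an undirected graph with $|V(H)|\le 11$. Then every acyclic orientation $\vec H$ of $H$ satisfies $\mathrm{dtw}(\vec H)\le 2$.
   Context: For a DAG $\vec H$, a source is a vertex of in-degree $0$; $S$ denotes the set of sources; $R(s)$ is the set of vertices reachable from $s$, and $R(B)=\bigcup_{s\in B}R(s)$. A DAG tree decomposition of $\vec H$ is a tree $T$ whose nodes (bags) are subsets of $S$ such that every source lies in some bag and, for any bags $B,B_1,B_2$ with $B$ on the path between $B_1$ and $B_2$ in $T$, $R(B_1)\cap R(B_2)\subseteq R(B)$; its width is the maximum bag size and $\mathrm{dtw}(\vec H)$ is the minimum width. *)

theory Defs
  imports Main
begin

definition undirected_graph :: "'a set \<Rightarrow> ('a \<Rightarrow> 'a \<Rightarrow> bool) \<Rightarrow> bool" where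
  "undirected_graph V E \<longleftrightarrow> finite V \<and>
     (\<forall>u v. E u v \<longrightarrow> u \<in> V \<and> v \<in> V) \<and>
     (\<forall>u v. E u v \<longrightarrow> E v u) \<and> (\<forall>v. \<not> E v v)"

definition orientation :: "('a \<Rightarrow> 'a \<Rightarrow> bool) \<Rightarrow> ('a \<Rightarrow> 'a \<Rightarrow> bool) \<Rightarrow> bool" where
  "orientation E A \<longleftrightarrow> (\<forall>u v. A u v \<longrightarrow> E u v) \<and>
     (\<forall>u v. E u v \<longrightarrow> (A u v \<or> A v u)) \<and> (\<forall>u v. A u v \<longrightarrow> \<not> A v u)"

definition acyclic_orientation :: "('a \<Rightarrow> 'a \<Rightarrow> bool) \<Rightarrow> ('a \<Rightarrow> 'a \<Rightarrow> bool) \<Rightarrow> bool" where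
  "acyclic_orientation E A \<longleftrightarrow> orientation E A \<and> (\<forall>v. \<not> A\<^sup>+\<^sup>+ v v)"

definition sources :: "'a set \<Rightarrow> ('a \<Rightarrow> 'a \<Rightarrow> bool) \<Rightarrow> 'a set" where
  "sources V A = {v \<in> V. \<forall>u. \<not> A u v}"

definition reach :: "('a \<Rightarrow> 'a \<Rightarrow> bool) \<Rightarrow> 'a \<Rightarrow> 'a set" where
  "reach A s = {v. A\<^sup>*\<^sup>* s v}"

definition reach_set :: "('a \<Rightarrow> 'a \<Rightarrow> bool) \<Rightarrow> 'a set \<Rightarrow> 'a set" where
  "reach_set A B = (\<Union>s\<in>B. reach A s)"

definition is_walk :: "(nat \<Rightarrow> nat \<Rightarrow> bool) \<Rightarrow> nat list \<Rightarrow> bool" where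
  "is_walk T p \<longleftrightarrow> p \<noteq> [] \<and> (\<forall>i. Suc i < length p \<longrightarrow> T (p ! i) (p ! Suc i))"

definition simple_path :: "(nat \<Rightarrow> nat \<Rightarrow> bool) \<Rightarrow> nat \<Rightarrow> nat \<Rightarrow> nat list \<Rightarrow> bool" where
  "simple_path T x y p \<longleftrightarrow> is_walk T p \<and> distinct p \<and> hd p = x \<and> last p = y"

definition is_cycle :: "(nat \<Rightarrow> nat \<Rightarrow> bool) \<Rightarrow> nat list \<Rightarrow> bool" where
  "is_cycle T c \<longleftrightarrow> length c \<ge> 3 \<and> is_walk T c \<and> distinct c \<and> T (last c) (hd c)"

definition tree :: "nat set \<Rightarrow> (nat \<Rightarrow> nat \<Rightarrow> bool) \<Rightarrow> bool" where
  "tree N T \<longleftrightarrow> finite N \<and> N \<noteq> {} \<and>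
     (\<forall>u v. T u v \<longrightarrow> u \<in> N \<and> v \<in> N) \<and>
     (\<forall>u v. T u v \<longrightarrow> T v u) \<and> (\<forall>v. \<not> T v v) \<and>
     (\<forall>x\<in>N. \<forall>y\<in>N. \<exists>p. simple_path T x y p) \<and>
     (\<forall>c. \<not> is_cycle T c)"

definition on_path :: "(nat \<Rightarrow> nat \<Rightarrow> bool) \<Rightarrow> nat \<Rightarrow> nat \<Rightarrow> nat \<Rightarrow> bool" where
  "on_path T t1 t2 t \<longleftrightarrow> (\<exists>p. simple_path T t1 t2 p \<and> t \<in> set p)"

definition dag_tree_decomposition ::
  "'a set \<Rightarrow> ('a \<Rightarrow> 'a \<Rightarrow> bool) \<Rightarrow> nat set \<Rightarrow> (nat \<Rightarrow> nat \<Rightarrow> bool) \<Rightarrow> (nat \<Rightarrow> 'a set) \<Rightarrow> bool" where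
  "dag_tree_decomposition V A N T bag \<longleftrightarrow> tree N T \<and>
     (\<forall>t\<in>N. bag t \<subseteq> sources V A) \<and>
     (\<forall>s\<in>sources V A. \<exists>t\<in>N. s \<in> bag t) \<and>
     (\<forall>t1\<in>N. \<forall>t2\<in>N. \<forall>t\<in>N. on_path T t1 t2 t \<longrightarrow>
        reach_set A (bag t1) \<inter> reach_set A (bag t2) \<subseteq> reach_set A (bag t))"

definition dtd_width :: "nat set \<Rightarrow> (nat \<Rightarrow> 'a set) \<Rightarrow> nat" where
  "dtd_width N bag = Max ((\<lambda>t. card (bag t)) ` N)"

definition dtw :: "'a set \<Rightarrow> ('a \<Rightarrow> 'a \<Rightarrow> bool) \<Rightarrow> nat" where
  "dtw V A = (LEAST k. \<exists>N T bag. dag_tree_decomposition V A N T bag \<and> dtd_width N bag = k)"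

end

theory Submission
  imports Defs
begin

(*
  Let S(v) be the set of sources from which v is reachable. The sets S(v) of size at least two
  form a family F with |Union F| + |F| <= |V| <= 11: their union consists of sources, and they
  are indexed by non-sources.

  The combinatorial core: for every finite family F of sets of size at least two with
  |Union F| + |F| <= 11 there is a set C of at most two points such that the members of F
  missing C are pairwise disjoint 2-sets. Deleting a point of degree d (with all members
  through it) lowers |Union F| + |F| by at least d + 1, so a point of degree three, or of
  degree two when there is slack, reduces the problem to one point and bound 7, which yields
  to a short case analysis. The remaining families have all degrees at most two, hence at
  most five members, and are settled by a case analysis on |F| and |Union F|.

  Given C, take the star with centre bag C whose leaves are the residual 2-sets and the
  single remaining sources. A vertex v reachable from two different leaves has |S(v)| >= 2,
  so S(v) is in F. A leaf meeting a residual 2-set is that 2-set, and S(v) meets both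
  leaves, so S(v) is not residual: it meets C, and v is reachable from C.
*)

section \<open>Deleting points from a set family\<close>

definition nonsingleton_family :: "'a set set \<Rightarrow> bool" where
  "nonsingleton_family F \<longleftrightarrow> finite F \<and> (\<forall>e\<in>F. 2 \<le> card e)"

definition avoiding :: "'a set set \<Rightarrow> 'a set \<Rightarrow> 'a set set" where
  "avoiding F C = {e \<in> F. e \<inter> C = {}}"

definition pair_matching :: "'a set set \<Rightarrow> bool" where
  "pair_matching M \<longleftrightarrow> (\<forall>e\<in>M. card e = 2) \<and> pairwise disjnt M"

definition reducible_to_matching :: "'a set set \<Rightarrow> nat \<Rightarrow> bool" where
  "reducible_to_matching F k \<longleftrightarrow> (\<exists>C\<subseteq>\<Union>F. card C \<le> k \<and> pair_matching (avoiding F C))"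

definition degree :: "'a set set \<Rightarrow> 'a \<Rightarrow> nat" where
  "degree F x = card {e \<in> F. x \<in> e}"

definition weight :: "'a set set \<Rightarrow> nat" where
  "weight F = card (\<Union>F) + card F"

lemma nonsingleton_familyD:
  assumes "nonsingleton_family F"
  shows "finite F" and "e \<in> F \<Longrightarrow> 2 \<le> card e" and "e \<in> F \<Longrightarrow> finite e"
  using assms card.infinite unfolding nonsingleton_family_def by fastforce+

lemma finite_Union_nonsingleton_family: "nonsingleton_family F \<Longrightarrow> finite (\<Union>F)"
  using nonsingleton_familyD by blast

lemma avoiding_subset: "avoiding F C \<subseteq> F"
  unfolding avoiding_def by auto

lemma avoiding_insert: "avoiding F (insert x C) = avoiding (avoiding F {x}) C"
  unfolding avoiding_def by auto

lemma nonsingleton_family_avoiding: "nonsingleton_family F \<Longrightarrow> nonsingleton_family (avoiding F C)"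
  unfolding nonsingleton_family_def avoiding_def by auto

lemma pair_matching_subset_singleton: "M \<subseteq> {g} \<Longrightarrow> card g = 2 \<Longrightarrow> pair_matching M"
  unfolding pair_matching_def pairwise_def by auto

lemma reducible_to_matchingI:
  "C \<subseteq> \<Union>F \<Longrightarrow> card C \<le> k \<Longrightarrow> pair_matching (avoiding F C) \<Longrightarrow> reducible_to_matching F k"
  unfolding reducible_to_matching_def by blast

lemma reducible_to_matching_if_avoiding_subset_pair:
  "C \<subseteq> \<Union>F \<Longrightarrow> card C \<le> k \<Longrightarrow> avoiding F C \<subseteq> {g} \<Longrightarrow> card g = 2 \<Longrightarrow>
    reducible_to_matching F k"
  by (rule reducible_to_matchingI) (auto intro: pair_matching_subset_singleton)

lemma reducible_to_matching_if_avoiding_empty: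
  "C \<subseteq> \<Union>F \<Longrightarrow> card C \<le> k \<Longrightarrow> avoiding F C = {} \<Longrightarrow> reducible_to_matching F k"
  by (rule reducible_to_matchingI) (auto simp: pair_matching_def)

lemma reducible_to_matching_insert:
  assumes "x \<in> \<Union>F" and "reducible_to_matching (avoiding F {x}) k"
  shows "reducible_to_matching F (Suc k)"
proof -
  obtain C where C: "C \<subseteq> \<Union>(avoiding F {x})" "card C \<le> k"
    and M: "pair_matching (avoiding (avoiding F {x}) C)"
    using assms(2) unfolding reducible_to_matching_def by blast
  have "C \<subseteq> \<Union>F" using C(1) avoiding_subset by blast
  have "card (insert x C) \<le> Suc k"
    using C(2) card_insert_le_m1[of "Suc k" C x] by simp
  moreover have "pair_matching (avoiding F (insert x C))"
    using M by (subst avoiding_insert)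
  ultimately show ?thesis
    using assms(1) \<open>C \<subseteq> \<Union>F\<close> by (intro reducible_to_matchingI) auto
qed

lemma hitting_set_card_le:
  assumes "nonsingleton_family F"
  shows "\<exists>C\<subseteq>\<Union>F. card C \<le> card F \<and> avoiding F C = {}"
proof (intro exI conjI)
  let ?C = "(\<lambda>e. SOME x. x \<in> e) ` F"
  have some_mem: "(SOME x. x \<in> e) \<in> e" if "e \<in> F" for e
    using nonsingleton_familyD(2)[OF assms that] by (metis card.empty ex_in_conv not_numeral_le_zero someI_ex)
  show "?C \<subseteq> \<Union>F" using some_mem by blast
  show "card ?C \<le> card F" by (rule card_image_le[OF nonsingleton_familyD(1)[OF assms]])
  show "avoiding F ?C = {}" using some_mem unfolding avoiding_def by blast
qed

lemma reducible_to_matching_if_card_le: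
  assumes "nonsingleton_family F" and "card F \<le> k"
  shows "reducible_to_matching F k"
  using hitting_set_card_le[OF assms(1)] assms(2)
  by (meson le_trans reducible_to_matching_if_avoiding_empty)

lemma reducible_to_matching_if_pair_and_card_le_Suc:
  assumes "nonsingleton_family F" and "g \<in> F" "card g = 2" and "card F \<le> Suc k"
  shows "reducible_to_matching F k"
proof -
  have "nonsingleton_family (F - {g})" using assms(1) unfolding nonsingleton_family_def by auto
  then obtain C where C: "C \<subseteq> \<Union>(F - {g})" "card C \<le> card (F - {g})" "avoiding (F - {g}) C = {}"
    using hitting_set_card_le by blast
  have "card (F - {g}) \<le> k" using assms(2,4) by simp
  moreover have "avoiding F C \<subseteq> {g}" using C(3) unfolding avoiding_def by auto
  ultimately show ?thesis
    using C(1,2) assms(3) by (intro reducible_to_matching_if_avoiding_subset_pair) auto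
qed

lemma reducible_to_matching_if_card_Union_le:
  assumes F: "nonsingleton_family F" and "card (\<Union>F) \<le> k + 2"
  shows "reducible_to_matching F k"
proof -
  obtain C where C: "C \<subseteq> \<Union>F" "card C = min k (card (\<Union>F))"
    by (meson min.cobounded2 obtain_subset_with_card_n)
  let ?R = "\<Union>F - C"
  have fin: "finite ?R" using finite_Union_nonsingleton_family[OF F] by blast
  have "card ?R \<le> 2"
    using C assms(2) card_Diff_subset[OF finite_subset[OF C(1)] C(1)] finite_Union_nonsingleton_family[OF F] by simp
  have "e = ?R \<and> card e = 2" if "e \<in> avoiding F C" for e
  proof -
    have "e \<in> F" "e \<subseteq> ?R" using that unfolding avoiding_def by auto
    then have "2 \<le> card e" "card e \<le> card ?R"
      using nonsingleton_familyD(2)[OF F] card_mono[OF fin] by auto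
    then show ?thesis using card_seteq[OF fin \<open>e \<subseteq> ?R\<close>] \<open>card ?R \<le> 2\<close> by auto
  qed
  then have "pair_matching (avoiding F C)" unfolding pair_matching_def pairwise_def by auto
  then show ?thesis using C by (intro reducible_to_matchingI) auto
qed

lemma weight_avoiding_point:
  assumes F: "nonsingleton_family F" and x: "x \<in> \<Union>F"
  shows "weight (avoiding F {x}) + degree F x + 1 \<le> weight F"
proof -
  have fin: "finite (\<Union>F)" "finite F"
    using finite_Union_nonsingleton_family nonsingleton_familyD(1) F by auto
  have "\<Union>(avoiding F {x}) \<subseteq> \<Union>F - {x}" unfolding avoiding_def by auto
  then have "card (\<Union>(avoiding F {x})) \<le> card (\<Union>F - {x})"
    using card_mono fin(1) by blast
  moreover have "card (\<Union>F - {x}) + 1 = card (\<Union>F)"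
    using card_Suc_Diff1[OF fin(1) x] by simp
  moreover have "card (avoiding F {x}) + degree F x = card F"
  proof -
    have "F = avoiding F {x} \<union> {e \<in> F. x \<in> e}" "avoiding F {x} \<inter> {e \<in> F. x \<in> e} = {}"
      unfolding avoiding_def by auto
    then show ?thesis unfolding degree_def using card_Un_disjoint fin(2) by (metis finite_Un)
  qed
  ultimately show ?thesis unfolding weight_def by linarith
qed

lemma degree_eq_0_if_notin_Union: "x \<notin> \<Union>F \<Longrightarrow> degree F x = 0"
proof -
  assume "x \<notin> \<Union>F"
  then have "{e \<in> F. x \<in> e} = {}" by blast
  then show ?thesis unfolding degree_def by (simp only: card.empty)
qed

lemma sum_card_eq_sum_degree:
  assumes "finite F" "finite (\<Union>F)"
  shows "(\<Sum>e\<in>F. card e) = (\<Sum>x\<in>\<Union>F. degree F x)"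
proof -
  have "(\<Sum>e\<in>F. card e) = (\<Sum>e\<in>F. \<Sum>x\<in>\<Union>F. if x \<in> e then 1 else 0)"
    using assms(2) by (intro sum.cong) (auto simp: sum.If_cases Int_absorb1 Sup_upper)
  also have "\<dots> = (\<Sum>x\<in>\<Union>F. \<Sum>e\<in>F. if x \<in> e then 1 else 0)" by (rule sum.swap)
  also have "\<dots> = (\<Sum>x\<in>\<Union>F. degree F x)"
    unfolding degree_def using assms(1) by (simp add: sum.If_cases Int_def)
  finally show ?thesis .
qed

lemma sum_card_le_if_degree_le:
  assumes F: "nonsingleton_family F" and "\<And>x. degree F x \<le> d"
  shows "(\<Sum>e\<in>F. card e) \<le> d * card (\<Union>F)"
proof -
  have "(\<Sum>e\<in>F. card e) = (\<Sum>x\<in>\<Union>F. degree F x)"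
    using finite_Union_nonsingleton_family nonsingleton_familyD(1) F by (intro sum_card_eq_sum_degree)
  also have "\<dots> \<le> d * card (\<Union>F)"
    using sum_bounded_above[of "\<Union>F" "degree F" d] assms(2) by (simp add: mult.commute)
  finally show ?thesis .
qed

lemma card_le_card_Union_if_degree_le:
  assumes F: "nonsingleton_family F" and "\<And>x. degree F x \<le> d"
  shows "2 * card F \<le> d * card (\<Union>F)"
proof -
  have "2 * card F \<le> (\<Sum>e\<in>F. card e)"
    using sum_bounded_below[of F 2 card] nonsingleton_familyD(2)[OF F] by (simp add: mult.commute)
  then show ?thesis using sum_card_le_if_degree_le[OF assms] by linarith
qed

lemma card_Union_ge_if_pairwise_disjnt:
  assumes F: "nonsingleton_family F" and "pairwise disjnt F" and "\<And>e. e \<in> F \<Longrightarrow> d \<le> card e"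
  shows "d * card F \<le> card (\<Union>F)"
proof -
  have "d * card F \<le> (\<Sum>e\<in>F. card e)"
    using sum_bounded_below[of F d card] assms(3) by (simp add: mult.commute)
  also have "\<dots> = card (\<Union>F)"
    using card_Union_disjoint[OF assms(2)] nonsingleton_familyD(3)[OF F] by simp
  finally show ?thesis .
qed

lemma ex_card_2_if_pairwise_disjnt:
  assumes F: "nonsingleton_family F" and "pairwise disjnt F" and "card (\<Union>F) < 3 * card F"
  shows "\<exists>g\<in>F. card g = 2"
proof (rule ccontr)
  assume "\<not> ?thesis"
  then have "3 \<le> card e" if "e \<in> F" for e
    using nonsingleton_familyD(2)[OF F that] that by fastforce
  then have "3 * card F \<le> card (\<Union>F)" by (rule card_Union_ge_if_pairwise_disjnt[OF F assms(2)])
  then show False using assms(3) by simp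
qed

lemma reducible_to_matching_if_pairwise_disjnt:
  assumes F: "nonsingleton_family F" and "pairwise disjnt F"
    and "card (\<Union>F) < 3 * card F" and "card F \<le> Suc k"
  shows "reducible_to_matching F k"
  using ex_card_2_if_pairwise_disjnt[OF F assms(2,3)] reducible_to_matching_if_pair_and_card_le_Suc[OF F _ _ assms(4)]
  by blast

lemma not_in_third_if_degree_le_2:
  assumes "degree F z \<le> 2" "finite F" and "e \<in> F" "f \<in> F" "g \<in> F" "e \<noteq> f" "g \<noteq> e" "g \<noteq> f"
    and "z \<in> e" "z \<in> f"
  shows "z \<notin> g"
proof
  assume "z \<in> g"
  then have "{e, f, g} \<subseteq> {S \<in> F. z \<in> S}" using assms by auto
  then have "card {e, f, g} \<le> degree F z" unfolding degree_def using assms(2) by (intro card_mono) auto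
  then show False using assms(1,6-8) by auto
qed

lemma Int_nonempty_if_subset_insert:
  assumes "A \<subseteq> insert x B" and "2 \<le> card A"
  shows "A \<inter> B \<noteq> {}"
proof
  assume "A \<inter> B = {}"
  then have "A \<subseteq> {x}" using assms(1) by auto
  then have "card A \<le> 1" using card_mono[of "{x}" A] by simp
  then show False using assms(2) by simp
qed

lemma card_doubleton_le: "card {x, y} \<le> 2"
  by (simp add: card_insert_le_m1)

lemma reducible_to_matching_2_if_avoiding_subset_pair:
  "a \<in> \<Union>F \<Longrightarrow> b \<in> \<Union>F \<Longrightarrow> avoiding F {a, b} \<subseteq> {p} \<Longrightarrow> card p = 2 \<Longrightarrow>
    reducible_to_matching F 2"
  by (rule reducible_to_matching_if_avoiding_subset_pair[OF _ card_doubleton_le]) auto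

lemma reducible_to_matching_2_if_avoiding_empty:
  "a \<in> \<Union>F \<Longrightarrow> b \<in> \<Union>F \<Longrightarrow> avoiding F {a, b} = {} \<Longrightarrow> reducible_to_matching F 2"
  by (rule reducible_to_matching_if_avoiding_empty[OF _ card_doubleton_le]) auto

lemma card_2_subsets_eq:
  assumes "A \<subseteq> S" "B \<subseteq> S" "finite S" "card S \<le> 2" "card A = 2" "card B = 2"
  shows "A = B"
  using card_seteq[OF assms(3,1)] card_seteq[OF assms(3,2)] assms(4-6) by simp

lemma pair_among_subsets_of_insert_triple:
  assumes "e \<subseteq> insert x g" "f \<subseteq> insert x g" "e \<inter> f \<inter> g = {}" "card g = 3"
    and "2 \<le> card e" "2 \<le> card f"
  shows "\<exists>p q w. {p, q} = {e, f} \<and> card p = 2 \<and> w \<in> q \<and> w \<in> g \<and> w \<notin> p"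
proof -
  have fin: "finite g" using assms(4) card.infinite by fastforce
  have card_le: "card h \<le> card (h \<inter> g) + 1" if "h \<subseteq> insert x g" for h
  proof -
    have "card h \<le> card (insert x (h \<inter> g))"
      using that fin by (intro card_mono) auto
    also have "\<dots> \<le> card (h \<inter> g) + 1" using fin by (simp add: card_insert_if)
    finally show ?thesis .
  qed
  have "card (e \<inter> g) + card (f \<inter> g) = card ((e \<inter> g) \<union> (f \<inter> g))"
    using fin assms(3) by (intro card_Un_disjoint[symmetric]) auto
  also have "\<dots> \<le> card g" using fin by (intro card_mono) auto
  finally have "card e = 2 \<or> card f = 2"
    using card_le[OF assms(1)] card_le[OF assms(2)] assms(4-6) by linarith
  moreover have "e \<inter> g \<noteq> {}" "f \<inter> g \<noteq> {}"
    using card_le[OF assms(1)] card_le[OF assms(2)] assms(5,6) by auto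
  then obtain u w where "u \<in> e" "u \<in> g" "w \<in> f" "w \<in> g" by blast
  ultimately show ?thesis
    using assms(3) insert_commute by blast
qed

lemma reducible_to_matching_three_sets:
  assumes F: "nonsingleton_family F" and FF: "F = {e, f, g}" and "card (\<Union>F) \<le> 4"
    and x: "x \<in> e" "x \<in> f" and efg: "e \<inter> f \<inter> g = {}"
  shows "reducible_to_matching F 1"
proof (cases "card g = 2")
  case True
  have "avoiding F {x} \<subseteq> {g}" using FF x by (auto simp: avoiding_def)
  then show ?thesis
    using True x FF by (intro reducible_to_matching_if_avoiding_subset_pair[of "{x}"]) auto
next
  case False
  have card: "2 \<le> card e" "2 \<le> card f" "2 \<le> card g"
    using nonsingleton_familyD(2)[OF F] FF by auto
  have fin: "finite (\<Union>F - {x})" using finite_Union_nonsingleton_family[OF F] by simp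
  have "x \<in> \<Union>F" "x \<notin> g" using FF x efg by auto
  then have sub: "g \<subseteq> \<Union>F - {x}" and "card (\<Union>F - {x}) \<le> 3"
    using FF assms(3) by auto
  then have "g = \<Union>F - {x}" "card g = 3"
    using card_seteq[OF fin sub] card_mono[OF fin sub] card(3) False by auto
  then have "e \<subseteq> insert x g" "f \<subseteq> insert x g" using FF by auto
  from pair_among_subsets_of_insert_triple[OF this efg \<open>card g = 3\<close> card(1,2)]
  obtain p q w where pq: "{p, q} = {e, f}" "card p = 2" "w \<in> q" "w \<in> g" "w \<notin> p"
    by blast
  then have "avoiding F {w} \<subseteq> {p}" using FF by (auto simp: avoiding_def doubleton_eq_iff)
  then show ?thesis
    using pq FF by (intro reducible_to_matching_if_avoiding_subset_pair[of "{w}"]) auto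
qed

lemma reducible_to_matching_if_weight_le_7:
  assumes F: "nonsingleton_family F" and w: "weight F \<le> 7"
  shows "reducible_to_matching F 1"
proof (cases "card (\<Union>F) \<le> 3 \<or> card F \<le> 1")
  case True
  then show ?thesis
    using F reducible_to_matching_if_card_Union_le reducible_to_matching_if_card_le by force
next
  case False
  then have m: "2 \<le> card F" "card F \<le> 3" "card (\<Union>F) + card F \<le> 7" "4 \<le> card (\<Union>F)"
    using w by (auto simp: weight_def)
  have finF: "finite F" using nonsingleton_familyD(1)[OF F] .
  show ?thesis
  proof (cases "\<exists>x\<in>\<Union>F. avoiding F {x} = {}")
    case True
    then obtain x where "x \<in> \<Union>F" "avoiding F {x} = {}" by blast
    then show ?thesis by (intro reducible_to_matching_if_avoiding_empty[of "{x}"]) auto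
  next
    case no_common_point: False
    show ?thesis
    proof (cases "pairwise disjnt F")
      case True
      have "2 * card F \<le> card (\<Union>F)"
        using card_Union_ge_if_pairwise_disjnt[OF F True] nonsingleton_familyD(2)[OF F] by blast
      then show ?thesis using reducible_to_matching_if_pairwise_disjnt[OF F True] m by simp
    next
      case False
      then obtain e f x where ef: "e \<in> F" "f \<in> F" "e \<noteq> f" "x \<in> e" "x \<in> f"
        unfolding pairwise_def disjnt_def by blast
      have "F \<noteq> {e, f}" using no_common_point ef by (auto simp: avoiding_def)
      moreover have sub: "{e, f} \<subseteq> F" and "card {e, f} = 2" using ef by auto
      ultimately have m3: "card F = 3" using m card_seteq[OF finF sub] by force
      then have "card (F - {e, f}) = 1"
        using card_Diff_subset[OF _ sub] \<open>card {e, f} = 2\<close> by simp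
      then obtain g where "F - {e, f} = {g}" by (rule card_1_singletonE)
      then have "F = {e, f} \<union> {g}" using Diff_partition[OF sub] by simp
      then have FF: "F = {e, f, g}" by auto
      have "e \<inter> f \<inter> g = {}" using no_common_point FF by (auto simp: avoiding_def)
      then show ?thesis
        using reducible_to_matching_three_sets[OF F FF _ ef(4,5)] m m3 by simp
    qed
  qed
qed

lemma reducible_to_matching_if_card_le_3:
  assumes F: "nonsingleton_family F" and "card F \<le> 3" and w: "weight F \<le> 11"
  shows "reducible_to_matching F 2"
proof (cases "card F \<le> 2")
  case True
  then show ?thesis by (rule reducible_to_matching_if_card_le[OF F])
next
  case False
  then have m: "card F = 3" "card (\<Union>F) \<le> 8" using assms(2) w by (auto simp: weight_def)
  show ?thesis
  proof (cases "pairwise disjnt F")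
    case True
    then show ?thesis using reducible_to_matching_if_pairwise_disjnt[OF F] m by simp
  next
    case False
    then obtain e f x where ef: "e \<in> F" "f \<in> F" "e \<noteq> f" "x \<in> e" "x \<in> f"
      unfolding pairwise_def disjnt_def by blast
    have "avoiding F {x} \<subseteq> F - {e, f}" using ef by (auto simp: avoiding_def)
    moreover have "card (F - {e, f}) = 1" using m ef by (simp add: card_Diff_subset)
    ultimately have "card (avoiding F {x}) \<le> 1"
      by (metis card_mono card.infinite one_neq_zero)
    then have "reducible_to_matching (avoiding F {x}) 1"
      by (intro reducible_to_matching_if_card_le nonsingleton_family_avoiding[OF F])
    then have "reducible_to_matching F (Suc 1)"
      by (rule reducible_to_matching_insert[rotated]) (use ef in blast)
    then show ?thesis by (simp add: numeral_2_eq_2)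
  qed
qed

lemma reducible_to_matching_two_sets_inside_triple:
  assumes FF: "F = {e, f, g, h}" and "e \<subseteq> insert x g" "f \<subseteq> insert x g" "e \<inter> f \<inter> g = {}"
    and "card g = 3" "2 \<le> card e" "2 \<le> card f" and z: "z \<in> h" "z \<notin> insert x g"
  shows "reducible_to_matching F 2"
proof -
  from pair_among_subsets_of_insert_triple[OF assms(2-7)]
  obtain p q w where pq: "{p, q} = {e, f}" "card p = 2" "w \<in> q" "w \<in> g" "w \<notin> p"
    by blast
  have "z \<notin> p" using pq(1) assms(2,3) z(2) by (auto simp: doubleton_eq_iff)
  then have "avoiding F {w, z} \<subseteq> {p}" using FF pq z(1) by (auto simp: avoiding_def doubleton_eq_iff)
  moreover have "w \<in> \<Union>F" "z \<in> \<Union>F" using FF pq z(1) by auto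
  ultimately show ?thesis using pq(2) by (intro reducible_to_matching_2_if_avoiding_subset_pair)
qed

lemma degree_eq_2E:
  assumes "degree F x = 2"
  obtains e f where "e \<in> F" "f \<in> F" "e \<noteq> f" "x \<in> e" "x \<in> f"
    and "\<forall>S\<in>F. x \<in> S \<longrightarrow> S = e \<or> S = f"
proof -
  obtain e f where ef: "{S \<in> F. x \<in> S} = {e, f}" "e \<noteq> f"
    using assms unfolding degree_def by (meson card_2_iff)
  have "e \<in> {S \<in> F. x \<in> S}" "f \<in> {S \<in> F. x \<in> S}" using ef(1) by simp_all
  moreover have "\<forall>S\<in>F. x \<in> S \<longrightarrow> S = e \<or> S = f" using ef(1) by blast
  ultimately show ?thesis using that ef(2) by blast
qed

lemma reducible_to_matching_four_sets_disjoint_triples: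
  assumes F: "nonsingleton_family F" and FF: "F = {e, f, g, h}" and n: "card (\<Union>F) = 7"
    and x: "x \<in> e" "x \<in> f" "x \<notin> g" "x \<notin> h" and efgh: "e \<inter> f \<inter> g = {}" "e \<inter> f \<inter> h = {}"
    and gh: "g \<inter> h = {}" "3 \<le> card g" "3 \<le> card h"
  shows "reducible_to_matching F 2"
proof -
  have fin: "finite (\<Union>F - {x})" using finite_Union_nonsingleton_family[OF F] by simp
  have sub: "g \<union> h \<subseteq> \<Union>F - {x}" using FF x by auto
  have "card (\<Union>F - {x}) = 6" using n x FF by simp
  moreover have "card (g \<union> h) = card g + card h"
    using gh(1) fin sub by (intro card_Un_disjoint) (auto intro: finite_subset)
  ultimately have "g \<union> h = \<Union>F - {x}" "card g = 3" "card h = 3"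
    using card_seteq[OF fin sub] card_mono[OF fin sub] gh by auto
  then have inside: "e \<subseteq> insert x (g \<union> h)" "f \<subseteq> insert x (g \<union> h)" using FF by auto
  have card: "2 \<le> card e" "2 \<le> card f" using nonsingleton_familyD(2)[OF F] FF by auto
  obtain yg yh where y: "yg \<in> g" "yh \<in> h" using gh(2,3) by fastforce
  show ?thesis
  proof (cases "\<exists>u w. (u \<in> e \<inter> g \<and> w \<in> f \<inter> h) \<or> (u \<in> e \<inter> h \<and> w \<in> f \<inter> g)")
    case True
    then obtain u w where "(u \<in> e \<inter> g \<and> w \<in> f \<inter> h) \<or> (u \<in> e \<inter> h \<and> w \<in> f \<inter> g)" by blast
    then have "avoiding F {u, w} = {}" "u \<in> \<Union>F" "w \<in> \<Union>F" using FF by (auto simp: avoiding_def)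
    then show ?thesis by (intro reducible_to_matching_2_if_avoiding_empty)
  next
    case False
    have "e \<inter> (g \<union> h) \<noteq> {}" "f \<inter> (g \<union> h) \<noteq> {}"
      using Int_nonempty_if_subset_insert[OF inside(1) card(1)]
        Int_nonempty_if_subset_insert[OF inside(2) card(2)] by simp_all
    then have "(e \<subseteq> insert x g \<and> f \<subseteq> insert x g) \<or> (e \<subseteq> insert x h \<and> f \<subseteq> insert x h)"
      using False inside by blast
    then show ?thesis
    proof (elim disjE conjE)
      assume "e \<subseteq> insert x g" "f \<subseteq> insert x g"
      from reducible_to_matching_two_sets_inside_triple[OF FF this efgh(1) \<open>card g = 3\<close> card y(2)]
      show ?thesis using gh(1) x y by blast
    next
      assume "e \<subseteq> insert x h" "f \<subseteq> insert x h"
      moreover have "F = {e, f, h, g}" using FF by auto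
      ultimately show ?thesis
        using reducible_to_matching_two_sets_inside_triple[OF _ _ _ efgh(2) \<open>card h = 3\<close> card y(1)]
          gh(1) x y by blast
    qed
  qed
qed

lemma reducible_to_matching_four_sets:
  assumes F: "nonsingleton_family F" and m: "card F = 4" and n: "card (\<Union>F) = 7"
    and deg: "\<And>z. degree F z \<le> 2" and x: "x \<in> \<Union>F" "degree F x = 2"
  shows "reducible_to_matching F 2"
proof -
  have finF: "finite F" using nonsingleton_familyD(1)[OF F] .
  obtain e f where ef: "e \<in> F" "f \<in> F" "e \<noteq> f" "x \<in> e" "x \<in> f"
    and through_x: "\<forall>S\<in>F. x \<in> S \<longrightarrow> S = e \<or> S = f"
    by (rule degree_eq_2E[OF x(2)])
  have "card (F - {e, f}) = 2" using m ef by (simp add: card_Diff_subset)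
  then obtain g h where gh: "F - {e, f} = {g, h}" "g \<noteq> h" by (meson card_2_iff)
  have "F = {e, f} \<union> {g, h}" using Diff_partition[of "{e, f}" F] gh(1) ef by simp
  then have FF: "F = {e, f, g, h}" by auto
  have "g \<in> F - {e, f}" "h \<in> F - {e, f}" using gh(1) by simp_all
  then have gh_mem: "g \<in> F" "g \<noteq> e" "g \<noteq> f" "h \<in> F" "h \<noteq> e" "h \<noteq> f" by simp_all
  then have xgh: "x \<notin> g" "x \<notin> h" using through_x by blast+
  have card: "2 \<le> card g" "2 \<le> card h" using nonsingleton_familyD(2)[OF F] gh_mem by auto
  obtain yg yh where y: "yg \<in> g" "yh \<in> h" using card by fastforce
  consider (meet) "g \<inter> h \<noteq> {}" | (g2) "card g = 2" | (h2) "card h = 2"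
    | (big) "g \<inter> h = {}" "3 \<le> card g" "3 \<le> card h" using card by force
  then show ?thesis
  proof cases
    case meet
    then obtain y where "y \<in> g" "y \<in> h" by blast
    then have "avoiding F {x, y} = {}" "y \<in> \<Union>F" using FF ef by (auto simp: avoiding_def)
    then show ?thesis using x(1) by (intro reducible_to_matching_2_if_avoiding_empty)
  next
    case g2
    have "avoiding F {x, yh} \<subseteq> {g}" "yh \<in> \<Union>F" using FF ef y by (auto simp: avoiding_def)
    then show ?thesis using g2 x(1) by (intro reducible_to_matching_2_if_avoiding_subset_pair)
  next
    case h2
    have "avoiding F {x, yg} \<subseteq> {h}" "yg \<in> \<Union>F" using FF ef y by (auto simp: avoiding_def)
    then show ?thesis using h2 x(1) by (intro reducible_to_matching_2_if_avoiding_subset_pair)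
  next
    case big
    have "e \<inter> f \<inter> g = {}" "e \<inter> f \<inter> h = {}"
      using not_in_third_if_degree_le_2[OF deg finF ef(1,2) _ ef(3)] gh_mem by blast+
    with reducible_to_matching_four_sets_disjoint_triples[OF F FF n ef(4,5) xgh] big
    show ?thesis by blast
  qed
qed

lemma five_sets_two_disjoint_pairs:
  assumes F: "nonsingleton_family F" and m: "card F = 5" and n: "card (\<Union>F) = 6"
    and deg: "\<And>z. degree F z \<le> 2" and x: "degree F x = 2"
  obtains e e1 e2 e3 e4 y where "F = {e, e1, e2, e3, e4}" "e1 \<noteq> e2" "e3 \<noteq> e4"
    "x \<in> e1" "x \<in> e2" "x \<notin> e" "x \<notin> e3" "x \<notin> e4"
    "y \<in> e3" "y \<in> e4" "y \<notin> e" "y \<notin> e1" "y \<notin> e2"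
proof -
  have finF: "finite F" using nonsingleton_familyD(1)[OF F] .
  obtain e1 e2 where e12: "e1 \<in> F" "e2 \<in> F" "e1 \<noteq> e2" "x \<in> e1" "x \<in> e2"
    and through_x: "\<forall>S\<in>F. x \<in> S \<longrightarrow> S = e1 \<or> S = e2"
    by (rule degree_eq_2E[OF x])
  let ?R = "F - {e1, e2}"
  have R: "nonsingleton_family ?R" "card ?R = 3"
    using F m e12 unfolding nonsingleton_family_def by (auto simp: card_Diff_subset)
  have "\<Union>?R \<subseteq> \<Union>F - {x}" using through_x by blast
  moreover have "x \<in> \<Union>F" using e12 by blast
  then have "card (\<Union>F - {x}) = 5" using n by simp
  ultimately have "card (\<Union>?R) \<le> 5"
    using card_mono finite_Union_nonsingleton_family[OF F] by (metis finite_Diff)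
  then have "\<not> pairwise disjnt ?R"
    using card_Union_ge_if_pairwise_disjnt[OF R(1), of 2] nonsingleton_familyD(2)[OF R(1)] R(2) by fastforce
  then obtain e3 e4 y where e34: "e3 \<in> ?R" "e4 \<in> ?R" "e3 \<noteq> e4" "y \<in> e3" "y \<in> e4"
    unfolding pairwise_def disjnt_def by blast
  have "card (?R - {e3, e4}) = 1" using R(2) e34 by (simp add: card_Diff_subset)
  then obtain e where e: "?R - {e3, e4} = {e}" by (rule card_1_singletonE)
  have "F = {e1, e2} \<union> ({e3, e4} \<union> {e})"
    using Diff_partition[of "{e1, e2}" F] Diff_partition[of "{e3, e4}" ?R] e e12 e34 by simp
  then have FF: "F = {e, e1, e2, e3, e4}" by auto
  have "e \<in> ?R - {e3, e4}" using e by simp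
  then have mem: "e \<in> F" "e \<notin> {e1, e2}" "e \<noteq> e3" "e \<noteq> e4"
    "e3 \<in> F" "e3 \<notin> {e1, e2}" "e4 \<in> F" "e4 \<notin> {e1, e2}"
    using e34(1,2) by simp_all
  have x_out: "x \<notin> e" "x \<notin> e3" "x \<notin> e4"
    using through_x mem(1,2,5-8) by blast+
  have y_notin: "y \<notin> S" if "S \<in> F" "S \<noteq> e3" "S \<noteq> e4" for S
    using not_in_third_if_degree_le_2[OF deg finF mem(5,7) that(1) e34(3) that(2,3) e34(4,5)] .
  have y_out: "y \<notin> e" "y \<notin> e1" "y \<notin> e2"
    using y_notin[OF mem(1,3,4)] y_notin[OF e12(1)] y_notin[OF e12(2)] mem(6,8) by auto
  show ?thesis by (rule that[OF FF e12(3) e34(3) e12(4,5) x_out e34(4,5) y_out])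
qed

lemma five_sets_member_meets_others:
  assumes F: "nonsingleton_family F" and FF: "F = {e, e1, e2, e3, e4}" and deg: "\<And>z. degree F z \<le> 2"
    and "e1 \<noteq> e2" and x: "x \<in> e1" "x \<in> e2" "x \<notin> e3" and y: "y \<notin> e1" "y \<notin> e2"
    and Z: "card (\<Union>F - {x, y} - e) \<le> 1"
  shows "e \<inter> (e1 \<union> e2 \<union> e3) \<noteq> {}"
proof
  assume disj: "e \<inter> (e1 \<union> e2 \<union> e3) = {}"
  let ?Z = "\<Union>F - {x, y}"
  have "e1 \<subseteq> \<Union>F" "e2 \<subseteq> \<Union>F" "e3 \<subseteq> \<Union>F" using FF by auto
  then have inside: "e1 \<subseteq> insert x (?Z - e)" "e2 \<subseteq> insert x (?Z - e)" "e3 \<subseteq> insert y (?Z - e)"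
    using disj x(3) y by blast+
  have card: "2 \<le> card e1" "2 \<le> card e2" "2 \<le> card e3"
    using nonsingleton_familyD(2)[OF F] FF by auto
  have "?Z - e \<noteq> {}" using Int_nonempty_if_subset_insert[OF inside(1) card(1)] by blast
  then have "0 < card (?Z - e)" using finite_Union_nonsingleton_family[OF F] by (simp add: card_gt_0_iff)
  then have "card (?Z - e) = 1" using Z by linarith
  then obtain z where "?Z - e = {z}" by (rule card_1_singletonE)
  then have "z \<in> e1" "z \<in> e2" "z \<in> e3"
    using Int_nonempty_if_subset_insert[OF inside(1) card(1)]
      Int_nonempty_if_subset_insert[OF inside(2) card(2)]
      Int_nonempty_if_subset_insert[OF inside(3) card(3)] by auto
  moreover have "e3 \<noteq> e1" "e3 \<noteq> e2" using x by blast+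
  ultimately show False
    using not_in_third_if_degree_le_2[OF deg _ _ _ _ assms(4)] nonsingleton_familyD(1)[OF F] FF by auto
qed

lemma reducible_to_matching_five_sets_pairs_through_point:
  assumes F: "nonsingleton_family F" and FF: "F = {e, e1, e2, e3, e4}" and deg: "\<And>z. degree F z \<le> 2"
    and "e3 \<noteq> e4" and x: "x \<in> e1" "x \<in> e2" "x \<notin> e3" "x \<notin> e4" and y: "y \<in> e3" "y \<in> e4" "y \<notin> e"
    and pairs: "card e3 = 2" "card e4 = 2" and Z: "card (\<Union>F - {x, y} - e) \<le> 1"
  shows "reducible_to_matching F 2"
proof (cases "e \<inter> (e3 \<union> e4) = {}")
  case False
  have hit: "reducible_to_matching F 2"
    if "F = {e, e1, e2, a, b}" "a \<noteq> b" "y \<in> a" "y \<in> b" "card b = 2" "w \<in> e" "w \<in> a" for w a b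
  proof -
    have "e \<noteq> a" "e \<noteq> b" using that(3,4) y(3) by auto
    then have "w \<notin> b"
      using not_in_third_if_degree_le_2[OF deg nonsingleton_familyD(1)[OF F], of e a b w] that by auto
    then have "avoiding F {w, x} \<subseteq> {b}" using that(1,6,7) x(1,2) by (auto simp: avoiding_def)
    moreover have "w \<in> \<Union>F" "x \<in> \<Union>F" using that(1,6) x(1) by auto
    ultimately show ?thesis using that(5) by (intro reducible_to_matching_2_if_avoiding_subset_pair)
  qed
  have "F = {e, e1, e2, e4, e3}" using FF by auto
  with False show ?thesis
    using hit[OF FF assms(4) y(1,2) pairs(2)] hit[of e4 e3] assms(4) y(1,2) pairs(1) by blast
next
  case True
  let ?P = "insert y (\<Union>F - {x, y} - e)"
  have "finite ?P" using finite_Union_nonsingleton_family[OF F] by simp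
  moreover have "card ?P \<le> 2" using Z card_insert_le_m1[of 2 "\<Union>F - {x, y} - e" y] by simp
  moreover have "e3 \<subseteq> ?P" "e4 \<subseteq> ?P" using True FF x(3,4) by auto
  ultimately have "e3 = e4" using card_2_subsets_eq pairs by blast
  then show ?thesis using assms(4) by simp
qed

lemma reducible_to_matching_five_sets_meeting:
  assumes F: "nonsingleton_family F" and FF: "F = {e, e1, e2, e3, e4}" and n: "card (\<Union>F) = 6"
    and deg: "\<And>z. degree F z \<le> 2" and "e1 \<noteq> e2" "e3 \<noteq> e4" and "3 \<le> card e"
    and x: "x \<in> e1" "x \<in> e2" "x \<notin> e" "x \<notin> e3" "x \<notin> e4"
    and y: "y \<in> e3" "y \<in> e4" "y \<notin> e" "y \<notin> e1" "y \<notin> e2"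
    and w: "w \<in> e" "w \<in> e1" and Z: "card (\<Union>F - {x, y} - e) \<le> 1"
  shows "reducible_to_matching F 2"
proof -
  have mem: "e \<in> F" "e1 \<in> F" "e2 \<in> F" "e3 \<in> F" "e4 \<in> F" using FF by auto
  have dist: "e \<noteq> e1" "e \<noteq> e2" "e \<noteq> e3" "e \<noteq> e4" "e1 \<noteq> e3" "e1 \<noteq> e4" "e2 \<noteq> e3" "e2 \<noteq> e4"
    using x y by blast+
  have card: "2 \<le> card e1" "2 \<le> card e2" "2 \<le> card e3" "2 \<le> card e4"
    using nonsingleton_familyD(2)[OF F] mem by auto
  have "w \<notin> e2"
    using not_in_third_if_degree_le_2[OF deg nonsingleton_familyD(1)[OF F] mem(1-3)] dist assms(5) w by metis
  show ?thesis
  proof (cases "card e2 = 2")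
    case True
    have "avoiding F {w, y} \<subseteq> {e2}" using FF w y \<open>w \<notin> e2\<close> by (auto simp: avoiding_def)
    moreover have "w \<in> \<Union>F" "y \<in> \<Union>F" using mem w y by auto
    ultimately show ?thesis using True by (intro reducible_to_matching_2_if_avoiding_subset_pair)
  next
    case False
    have "(\<Sum>S\<in>F. card S) \<le> 12" using sum_card_le_if_degree_le[OF F deg] n by simp
    then have "card e + card e1 + card e2 + card e3 + card e4 \<le> 12"
      using FF dist assms(5,6) by simp
    then have "card e3 = 2" "card e4 = 2" using False card assms(7) by linarith+
    then show ?thesis
      using reducible_to_matching_five_sets_pairs_through_point[OF F FF deg assms(6) x(1,2,4,5) y(1-3)] Z
      by blast
  qed
qed

lemma reducible_to_matching_five_sets_large_member:
  assumes F: "nonsingleton_family F" and FF: "F = {e, e1, e2, e3, e4}" and n: "card (\<Union>F) = 6"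
    and deg: "\<And>z. degree F z \<le> 2" and e12: "e1 \<noteq> e2" and e34: "e3 \<noteq> e4" and big: "3 \<le> card e"
    and x: "x \<in> e1" "x \<in> e2" "x \<notin> e" "x \<notin> e3" "x \<notin> e4"
    and y: "y \<in> e3" "y \<in> e4" "y \<notin> e" "y \<notin> e1" "y \<notin> e2"
  shows "reducible_to_matching F 2"
proof -
  let ?Z = "\<Union>F - {x, y}"
  have finZ: "finite ?Z" using finite_Union_nonsingleton_family[OF F] by simp
  have "x \<noteq> y" using x y by blast
  then have "card ?Z = 4" using n x y FF by (subst card_Diff_subset) auto
  moreover have "e \<subseteq> ?Z" using FF x y by auto
  ultimately have Z: "card (?Z - e) \<le> 1"
    using big card_Diff_subset[OF _ \<open>e \<subseteq> ?Z\<close>] finZ by (simp add: finite_subset)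
  then obtain w where w: "w \<in> e" "w \<in> e1 \<or> w \<in> e2 \<or> w \<in> e3"
    using five_sets_member_meets_others[OF F FF deg e12 x(1,2,4) y(4,5)] by blast
  have perms: "F = {e, e2, e1, e3, e4}" "F = {e, e3, e4, e1, e2}" using FF by auto
  have Z': "card (\<Union>F - {y, x} - e) \<le> 1" using Z by (simp add: insert_commute)
  from w(2) show ?thesis
  proof (elim disjE)
    assume "w \<in> e1"
    then show ?thesis
      by (rule reducible_to_matching_five_sets_meeting[OF F FF n deg e12 e34 big x y w(1) _ Z])
  next
    assume "w \<in> e2"
    then show ?thesis
      by (rule reducible_to_matching_five_sets_meeting[OF F perms(1) n deg e12[symmetric] e34 big
            x(2,1,3-5) y(1-3,5,4) w(1) _ Z])
  next
    assume "w \<in> e3"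
    then show ?thesis
      by (rule reducible_to_matching_five_sets_meeting[OF F perms(2) n deg e34 e12 big y x w(1) _ Z'])
  qed
qed

lemma reducible_to_matching_five_sets:
  assumes F: "nonsingleton_family F" and m: "card F = 5" and n: "card (\<Union>F) = 6"
    and deg: "\<And>z. degree F z \<le> 2" and x: "degree F x = 2"
  shows "reducible_to_matching F 2"
proof -
  obtain e e1 e2 e3 e4 y where FF: "F = {e, e1, e2, e3, e4}" and e12: "e1 \<noteq> e2" and e34: "e3 \<noteq> e4"
    and x: "x \<in> e1" "x \<in> e2" "x \<notin> e" "x \<notin> e3" "x \<notin> e4"
    and y: "y \<in> e3" "y \<in> e4" "y \<notin> e" "y \<notin> e1" "y \<notin> e2"
    by (rule five_sets_two_disjoint_pairs[OF assms])
  show ?thesis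
  proof (cases "card e = 2")
    case True
    have "avoiding F {x, y} \<subseteq> {e}" using FF x y by (auto simp: avoiding_def)
    then show ?thesis using True x y FF
      by (intro reducible_to_matching_if_avoiding_subset_pair[OF _ card_doubleton_le]) auto
  next
    case False
    moreover have "2 \<le> card e" using nonsingleton_familyD(2)[OF F] FF by simp
    ultimately have "3 \<le> card e" by simp
    then show ?thesis by (rule reducible_to_matching_five_sets_large_member[OF F FF n deg e12 e34 _ x y])
  qed
qed

lemma reducible_to_matching_if_degree_le_2:
  assumes F: "nonsingleton_family F" and w: "weight F \<le> 11" and deg: "\<And>z. degree F z \<le> 2"
    and tight: "\<And>x. degree F x = 2 \<Longrightarrow> weight F = 11"
  shows "reducible_to_matching F 2"
proof (cases "card F \<le> 3")
  case True
  then show ?thesis using reducible_to_matching_if_card_le_3[OF F _ w] by simp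
next
  case m: False
  have "\<exists>x. degree F x = 2"
  proof (rule ccontr)
    assume "\<not> ?thesis"
    then have ne2: "degree F z \<noteq> 2" for z by blast
    have "degree F z \<le> 1" for z using deg[of z] ne2[of z] by linarith
    from card_le_card_Union_if_degree_le[OF F this] have "2 * card F \<le> card (\<Union>F)" by simp
    then show False using w m by (simp add: weight_def)
  qed
  then obtain x where x: "degree F x = 2" by blast
  then have "x \<in> \<Union>F" using degree_eq_0_if_notin_Union by fastforce
  moreover have "card F \<le> card (\<Union>F)" using card_le_card_Union_if_degree_le[OF F deg] by simp
  moreover have "weight F = 11" by (rule tight[OF x])
  ultimately consider "card F = 4" "card (\<Union>F) = 7" | "card F = 5" "card (\<Union>F) = 6"
    using m by (force simp: weight_def)
  then show ?thesis
  proof cases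
    case 1
    then show ?thesis using reducible_to_matching_four_sets[OF F _ _ deg \<open>x \<in> \<Union>F\<close> x] by blast
  next
    case 2
    then show ?thesis using reducible_to_matching_five_sets[OF F _ _ deg x] by blast
  qed
qed

lemma reducible_to_matching_if_weight_le_11:
  assumes F: "nonsingleton_family F" and w: "weight F \<le> 11"
  shows "reducible_to_matching F 2"
proof (cases "card (\<Union>F) \<le> 4")
  case True
  then show ?thesis using F by (intro reducible_to_matching_if_card_Union_le) auto
next
  case False
  show ?thesis
  proof (cases "\<exists>x\<in>\<Union>F. 3 \<le> degree F x \<or> (degree F x = 2 \<and> weight F \<le> 10)")
    case True
    then obtain x where x: "x \<in> \<Union>F" and "3 \<le> degree F x \<or> (degree F x = 2 \<and> weight F \<le> 10)"
      by blast
    then have "weight (avoiding F {x}) \<le> 7" using weight_avoiding_point[OF F x] w by linarith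
    then have "reducible_to_matching (avoiding F {x}) 1"
      by (intro reducible_to_matching_if_weight_le_7 nonsingleton_family_avoiding[OF F])
    then show ?thesis using reducible_to_matching_insert[OF x] by (simp add: numeral_2_eq_2)
  next
    case False
    then have deg: "degree F z \<le> 2" and tight: "degree F z = 2 \<Longrightarrow> weight F = 11" for z
      using degree_eq_0_if_notin_Union[of z F] w by (cases "z \<in> \<Union>F"; force)+
    show ?thesis by (rule reducible_to_matching_if_degree_le_2[OF F w deg tight])
  qed
qed

section \<open>Star-shaped DAG tree decompositions\<close>

definition star_adj :: "nat \<Rightarrow> nat \<Rightarrow> nat \<Rightarrow> bool" where
  "star_adj r i j \<longleftrightarrow> (i = 0 \<and> j \<in> {1..r}) \<or> (j = 0 \<and> i \<in> {1..r})"

lemma star_adj_zero: "star_adj r i j \<Longrightarrow> i = 0 \<longleftrightarrow> j \<noteq> 0"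
  unfolding star_adj_def by auto

lemma star_walk_interior:
  assumes p: "is_walk (star_adj r) p" "distinct p" and i: "0 < i" "Suc i < length p"
  shows "p ! i = 0"
proof (rule ccontr)
  assume "p ! i \<noteq> 0"
  moreover have edge: "star_adj r (p ! j) (p ! Suc j)" if "Suc j < length p" for j
    using p(1) that unfolding is_walk_def by blast
  have "star_adj r (p ! (i - 1)) (p ! i)" using edge[of "i - 1"] i by simp
  moreover have "star_adj r (p ! i) (p ! Suc i)" using edge[of i] i by simp
  ultimately have "p ! (i - 1) = p ! Suc i" using star_adj_zero by metis
  then show False using nth_eq_iff_index_eq[OF p(2)] i by fastforce
qed

lemma on_path_star_adj:
  assumes "on_path (star_adj r) t1 t2 t"
  shows "t = t1 \<or> t = t2 \<or> (t = 0 \<and> t1 \<noteq> t2)"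
proof -
  obtain p where p: "is_walk (star_adj r) p" "distinct p" "hd p = t1" "last p = t2" "t \<in> set p"
    using assms unfolding on_path_def simple_path_def by blast
  then obtain i where i: "i < length p" "t = p ! i" by (metis in_set_conv_nth)
  have ne: "p \<noteq> []" using p(1) unfolding is_walk_def by simp
  consider "i = 0" | "i = length p - 1" | "0 < i" "Suc i < length p" using i(1) by linarith
  then show ?thesis
  proof cases
    case 3
    have "hd p \<noteq> last p"
      using 3 ne nth_eq_iff_index_eq[OF p(2), of 0 "length p - 1"] by (simp add: hd_conv_nth last_conv_nth)
    then show ?thesis using star_walk_interior[OF p(1,2) 3] i p(3,4) by simp
  qed (use i p ne in \<open>auto simp: hd_conv_nth last_conv_nth\<close>)
qed

lemma tree_star_adj: "tree {0..r} (star_adj r)"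
proof -
  have "\<exists>p. simple_path (star_adj r) x y p" if "x \<in> {0..r}" "y \<in> {0..r}" for x y
  proof -
    consider "x = y" | "x \<noteq> y" "x = 0 \<or> y = 0" | "x \<noteq> 0" "y \<noteq> 0" "x \<noteq> y" by blast
    then show ?thesis
    proof cases
      case 1
      then show ?thesis by (intro exI[of _ "[x]"]) (simp add: simple_path_def is_walk_def)
    next
      case 2
      then show ?thesis using that
        by (intro exI[of _ "[x, y]"]) (auto simp: simple_path_def is_walk_def star_adj_def)
    next
      case 3
      then show ?thesis using that
        by (intro exI[of _ "[x, 0, y]"])
          (auto simp: simple_path_def is_walk_def star_adj_def less_Suc_eq nth_Cons')
    qed
  qed
  moreover have "\<not> is_cycle (star_adj r) c" for c
  proof
    assume c: "is_cycle (star_adj r) c"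
    then have walk: "is_walk (star_adj r) c" "distinct c" and len: "3 \<le> length c"
      and closing: "star_adj r (last c) (hd c)" unfolding is_cycle_def by auto
    have "c ! 1 = 0" using star_walk_interior[OF walk, of 1] len by simp
    moreover have "c ! 0 \<noteq> c ! 1"
      by (subst nth_eq_iff_index_eq[OF walk(2)]) (use len in auto)
    moreover have "c ! (length c - 1) \<noteq> c ! 1"
      by (subst nth_eq_iff_index_eq[OF walk(2)]) (use len in auto)
    ultimately show False
      using closing star_adj_zero len by (metis hd_conv_nth last_conv_nth list.size(3) not_numeral_le_zero)
  qed
  ultimately show ?thesis unfolding tree_def by (auto simp: star_adj_def)
qed

lemma dtw_le_dtd_width: "dag_tree_decomposition V A N T bag \<Longrightarrow> dtw V A \<le> dtd_width N bag"
  unfolding dtw_def by (rule Least_le) blast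

lemma dag_tree_decomposition_star_adj:
  assumes bags: "\<And>t. t \<le> r \<Longrightarrow> bag t \<subseteq> sources V A"
    and cover: "\<And>s. s \<in> sources V A \<Longrightarrow> \<exists>t\<in>{0..r}. s \<in> bag t"
    and sep: "\<And>t1 t2. 0 < t1 \<Longrightarrow> 0 < t2 \<Longrightarrow> t1 \<le> r \<Longrightarrow> t2 \<le> r \<Longrightarrow> t1 \<noteq> t2 \<Longrightarrow>
      reach_set A (bag t1) \<inter> reach_set A (bag t2) \<subseteq> reach_set A (bag 0)"
  shows "dag_tree_decomposition V A {0..r} (star_adj r) bag"
  unfolding dag_tree_decomposition_def
proof (intro conjI ballI impI)
  fix t1 t2 t assume t: "t1 \<in> {0..r}" "t2 \<in> {0..r}" "t \<in> {0..r}" and "on_path (star_adj r) t1 t2 t"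
  from on_path_star_adj[OF this(4)]
  consider "t = t1 \<or> t = t2" | "t = 0" "0 < t1" "0 < t2" "t1 \<noteq> t2" by auto
  then show "reach_set A (bag t1) \<inter> reach_set A (bag t2) \<subseteq> reach_set A (bag t)"
  proof cases
    case 2
    then show ?thesis using sep t by simp
  qed auto
qed (use tree_star_adj bags cover in auto)

lemma dtw_le_if_star_decomposition:
  assumes C: "C \<subseteq> sources V A" "card C \<le> k"
    and G: "finite G" "\<And>B. B \<in> G \<Longrightarrow> B \<subseteq> sources V A \<and> card B \<le> k"
      "sources V A \<subseteq> C \<union> \<Union>G"
    and sep: "pairwise (\<lambda>B1 B2. reach_set A B1 \<inter> reach_set A B2 \<subseteq> reach_set A C) G"
  shows "dtw V A \<le> k"
proof -
  obtain h where h: "bij_betw h {0..<card G} G" using ex_bij_betw_nat_finite[OF G(1)] by blast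
  define bag where "bag t = (if t = 0 then C else h (t - 1))" for t
  have bag_G: "bag t \<in> G" if "0 < t" "t \<le> card G" for t
    using that bij_betwE[OF h] unfolding bag_def by auto
  have "dag_tree_decomposition V A {0..card G} (star_adj (card G)) bag"
  proof (rule dag_tree_decomposition_star_adj)
    show "bag t \<subseteq> sources V A" if "t \<le> card G" for t
      using that bag_G G(2) C(1) unfolding bag_def by (cases "t = 0") auto
    show "\<exists>t\<in>{0..card G}. s \<in> bag t" if s: "s \<in> sources V A" for s
    proof (cases "s \<in> C")
      case True
      then show ?thesis unfolding bag_def by (intro bexI[of _ 0]) simp_all
    next
      case False
      then obtain B where B: "B \<in> G" "s \<in> B" using s G(3) by blast
      then have "B \<in> h ` {0..<card G}" using bij_betw_imp_surj_on[OF h] by simp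
      then obtain i where "i < card G" "h i = B" by auto
      then show ?thesis unfolding bag_def using B(2) by (intro bexI[of _ "Suc i"]) auto
    qed
    show "reach_set A (bag t1) \<inter> reach_set A (bag t2) \<subseteq> reach_set A (bag 0)"
      if "0 < t1" "0 < t2" "t1 \<le> card G" "t2 \<le> card G" "t1 \<noteq> t2" for t1 t2
    proof -
      have "t1 - 1 \<in> {0..<card G}" "t2 - 1 \<in> {0..<card G}" "t1 - 1 \<noteq> t2 - 1" using that by auto
      then have "h (t1 - 1) \<noteq> h (t2 - 1)" using inj_onD[OF bij_betw_imp_inj_on[OF h]] by blast
      then show ?thesis using sep bag_G that unfolding pairwise_def bag_def by auto
    qed
  qed
  moreover have "dtd_width {0..card G} bag \<le> k"
    using bag_G G(2) C(2) unfolding dtd_width_def bag_def by (auto simp: Max_le_iff)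
  ultimately show ?thesis using dtw_le_dtd_width order_trans by blast
qed

section \<open>Sources reaching a vertex\<close>

definition source_ancestors :: "'a set \<Rightarrow> ('a \<Rightarrow> 'a \<Rightarrow> bool) \<Rightarrow> 'a \<Rightarrow> 'a set" where
  "source_ancestors V A v = {s \<in> sources V A. A\<^sup>*\<^sup>* s v}"

definition ancestor_family :: "'a set \<Rightarrow> ('a \<Rightarrow> 'a \<Rightarrow> bool) \<Rightarrow> 'a set set" where
  "ancestor_family V A =
     source_ancestors V A ` {v \<in> V - sources V A. 2 \<le> card (source_ancestors V A v)}"

lemma reaches_source_eq:
  assumes "s \<in> sources V A" and "A\<^sup>*\<^sup>* u s"
  shows "u = s"
  using assms(2) by (cases rule: rtranclp.cases) (use assms(1) in \<open>auto simp: sources_def\<close>)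

lemma Union_ancestor_family_subset: "\<Union>(ancestor_family V A) \<subseteq> sources V A"
  unfolding ancestor_family_def source_ancestors_def by auto

lemma nonsingleton_family_ancestor_family:
  "finite V \<Longrightarrow> nonsingleton_family (ancestor_family V A)"
  unfolding nonsingleton_family_def ancestor_family_def by auto

lemma weight_ancestor_family_le:
  assumes "finite V"
  shows "weight (ancestor_family V A) \<le> card V"
proof -
  have S: "sources V A \<subseteq> V" unfolding sources_def by auto
  have "card (\<Union>(ancestor_family V A)) \<le> card (sources V A)"
    by (rule card_mono[OF finite_subset[OF S assms] Union_ancestor_family_subset])
  moreover have "card (ancestor_family V A) \<le> card (V - sources V A)"
    unfolding ancestor_family_def using assms
    by (intro card_image_le[THEN order_trans] card_mono) auto
  moreover have "card (sources V A) + card (V - sources V A) = card V"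
    using card_Diff_subset[OF finite_subset[OF S assms] S] card_mono[OF assms S] by simp
  ultimately show ?thesis unfolding weight_def by linarith
qed

lemma source_ancestors_mem_ancestor_family:
  assumes V: "finite V" "\<And>u w. A u w \<Longrightarrow> w \<in> V"
    and z: "z1 \<in> sources V A" "z2 \<in> sources V A" "z1 \<noteq> z2" "A\<^sup>*\<^sup>* z1 v" "A\<^sup>*\<^sup>* z2 v"
  shows "source_ancestors V A v \<in> ancestor_family V A"
proof -
  have "v \<notin> sources V A" using z reaches_source_eq by metis
  moreover have "v \<in> V"
    using z(4) by (cases rule: rtranclp.cases) (use z(1) \<open>v \<notin> sources V A\<close> V(2) in auto)
  moreover have "2 \<le> card (source_ancestors V A v)"
  proof -
    have "{z1, z2} \<subseteq> source_ancestors V A v" using z unfolding source_ancestors_def by auto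
    moreover have "finite (source_ancestors V A v)"
      using V(1) unfolding source_ancestors_def sources_def by auto
    ultimately have "card {z1, z2} \<le> card (source_ancestors V A v)" by (rule card_mono[rotated])
    then show ?thesis using z(3) by simp
  qed
  ultimately show ?thesis unfolding ancestor_family_def by blast
qed

lemma reach_set_Int_cases:
  assumes V: "finite V" "\<And>u w. A u w \<Longrightarrow> w \<in> V"
    and B: "B1 \<subseteq> sources V A" "B2 \<subseteq> sources V A" "disjnt B1 B2"
    and v: "v \<in> reach_set A B1 \<inter> reach_set A B2"
  obtains "v \<in> reach_set A C"
  | "source_ancestors V A v \<in> avoiding (ancestor_family V A) C"
    "B1 \<inter> source_ancestors V A v \<noteq> {}" "B2 \<inter> source_ancestors V A v \<noteq> {}"
proof -
  obtain z1 z2 where z: "z1 \<in> B1" "A\<^sup>*\<^sup>* z1 v" "z2 \<in> B2" "A\<^sup>*\<^sup>* z2 v"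
    using v unfolding reach_set_def reach_def by blast
  have zS: "z1 \<in> sources V A" "z2 \<in> sources V A" "z1 \<noteq> z2" using z(1,3) B by (auto simp: disjnt_def)
  have P: "source_ancestors V A v \<in> ancestor_family V A"
    by (rule source_ancestors_mem_ancestor_family[OF V zS z(2,4)])
  have meets: "B1 \<inter> source_ancestors V A v \<noteq> {}" "B2 \<inter> source_ancestors V A v \<noteq> {}"
    using z zS unfolding source_ancestors_def by auto
  show ?thesis
  proof (cases "source_ancestors V A v \<inter> C = {}")
    case True
    then show ?thesis using that(2) P meets by (simp add: avoiding_def)
  next
    case False
    then obtain c where "c \<in> C" "A\<^sup>*\<^sup>* c v" unfolding source_ancestors_def by blast
    then show ?thesis using that(1) unfolding reach_set_def reach_def by blast
  qed
qed

lemma dtw_le_if_reducible_to_matching: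
  assumes V: "finite V" "\<And>u w. A u w \<Longrightarrow> w \<in> V"
    and red: "reducible_to_matching (ancestor_family V A) k" and k: "2 \<le> k"
  shows "dtw V A \<le> k"
proof -
  let ?S = "sources V A" and ?F = "ancestor_family V A"
  obtain C where C: "C \<subseteq> \<Union>?F" "card C \<le> k" and M: "pair_matching (avoiding ?F C)"
    using red unfolding reducible_to_matching_def by blast
  let ?M = "avoiding ?F C"
  define G where "G = ?M \<union> (\<lambda>s. {s}) ` (?S - C - \<Union>?M)"
  have M_sub: "\<Union>?M \<subseteq> ?S"
    using Union_mono[OF avoiding_subset] Union_ancestor_family_subset by (rule order_trans)
  have G_sub: "B \<subseteq> ?S" if "B \<in> G" for B using that M_sub unfolding G_def by auto
  have group_eq: "B = P" if "B \<in> G" "P \<in> ?M" "B \<inter> P \<noteq> {}" for B P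
    using that M unfolding G_def pair_matching_def pairwise_def disjnt_def by auto
  have G_disj: "disjnt B1 B2" if "B1 \<in> G" "B2 \<in> G" "B1 \<noteq> B2" for B1 B2
    using that group_eq unfolding G_def disjnt_def by auto
  show ?thesis
  proof (rule dtw_le_if_star_decomposition)
    show "C \<subseteq> ?S" using C(1) Union_ancestor_family_subset by (rule order_trans)
    show "card C \<le> k" by (rule C(2))
    show "finite G"
      unfolding G_def using V(1) nonsingleton_familyD(1)[OF nonsingleton_family_ancestor_family[OF V(1)]]
      by (auto simp: sources_def intro: finite_subset[OF avoiding_subset])
    show "B \<subseteq> ?S \<and> card B \<le> k" if "B \<in> G" for B
      using that G_sub M k unfolding G_def pair_matching_def by auto
    show "?S \<subseteq> C \<union> \<Union>G" unfolding G_def by auto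
    show "pairwise (\<lambda>B1 B2. reach_set A B1 \<inter> reach_set A B2 \<subseteq> reach_set A C) G"
    proof (intro pairwiseI subsetI)
      fix B1 B2 v assume B: "B1 \<in> G" "B2 \<in> G" "B1 \<noteq> B2"
        and v: "v \<in> reach_set A B1 \<inter> reach_set A B2"
      have "v \<in> reach_set A C \<or> (B1 = source_ancestors V A v \<and> B2 = source_ancestors V A v)"
        by (rule reach_set_Int_cases[OF V G_sub[OF B(1)] G_sub[OF B(2)] G_disj[OF B] v, where C = C])
          (use group_eq B(1,2) in blast)+
      then show "v \<in> reach_set A C" using B(3) by blast
    qed
  qed
qed

theorem mainTheorem17:
  fixes V :: "'a set" and E A :: "'a \<Rightarrow> 'a \<Rightarrow> bool"
  assumes "undirected_graph V E"
    and "card V \<le> 11"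
    and "acyclic_orientation E A"
  shows "dtw V A \<le> 2"
proof -
  have V: "finite V" "\<And>u w. A u w \<Longrightarrow> w \<in> V"
    using assms(1,3) unfolding undirected_graph_def acyclic_orientation_def orientation_def by blast+
  have "weight (ancestor_family V A) \<le> 11"
    using weight_ancestor_family_le[OF V(1), of A] assms(2) by linarith
  then have "reducible_to_matching (ancestor_family V A) 2"
    by (rule reducible_to_matching_if_weight_le_11[OF nonsingleton_family_ancestor_family[OF V(1)]])
  then show ?thesis using dtw_le_if_reducible_to_matching[OF V] by simp
qed

end
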